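(* Let $p$ be a prime, $R$ an $F$-pure ring of characteristic $p$, and $f\in R$ a non-zero non-unit. Let $d\ge1$ be an integer and $\alpha\in[0,1]$ with $(p^d-1)\alpha\in\mathbb{N}$. If the inclusion $R\cdot f^{\langle\alpha\rangle_d}\subseteq R^{1/p^d}$ splits over $R$, then the inclusion $R\cdot f^{\langle\alpha\rangle_{ed}}\subseteq R^{1/p^{ed}}$ splits over $R$ for every integer $e\ge1$.
   Context: A ring $R$ of characteristic $p$ is $F$-pure if $R\subseteq R^{1/p}$ splits as a map of $R$-modules. Roots and splitting. $R^{1/p^e}$ is the ring of formal $p^e$-th roots of elements of $R$, containing $R$ via $r\mapsto(r^{p^e})^{1/p^e}$. For $a\in\mathbb{N}$, $f^{a/p^e}:=(f^a)^{1/p^e}$. The inclusion $R\cdot t\subseteq R^{1/p^e}$ splits over $R$ if some $R$-linear $\theta:R^{1/p^e}\to R$ has $\theta(t)=1$. Truncations. For $\alpha\in(0,1]$ with non-terminating base $p$ expansion $\alpha=\sum_{e\ge1}a_e/p^e$ (digits $0\le a_e\le p-1$, not all eventually zero), $\langle\alpha\rangle_e:=\sum_{i=1}^e a_i/p^i\in\frac1{p^e}\mathbb{N}$. By convention $\langle0\rangle_e=0$. *)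

theory Defs
  imports Complex_Main "HOL-Computational_Algebra.Primes"
begin

text \<open>R^{1/p^e} is the ring of formal p^e-th roots t^{1/p^e} (t in R); as an R-module
it is R itself with scalar action r . t^{1/p^e} = (r^{p^e} t)^{1/p^e}.
An R-linear map R^{1/p^e} -> R is thus an additive map theta on R with
theta (r^(p^e) * t) = r * theta t.  The inclusion R . t^{1/p^e} in R^{1/p^e}
splits iff such a theta satisfies theta t = 1.\<close>

definition root_splits :: "nat \<Rightarrow> nat \<Rightarrow> 'a::comm_ring_1 \<Rightarrow> bool" where
  "root_splits p e t \<longleftrightarrow>
     (\<exists>\<theta> :: 'a \<Rightarrow> 'a.
        (\<forall>x y. \<theta> (x + y) = \<theta> x + \<theta> y) \<and>
        (\<forall>r x. \<theta> (r ^ (p ^ e) * x) = r * \<theta> x) \<and>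
        \<theta> t = 1)"

text \<open>F-pure: R in R^{1/p} splits, i.e. R . 1^{1/p} in R^{1/p} splits.\<close>
definition F_pure :: "nat \<Rightarrow> 'a::comm_ring_1 itself \<Rightarrow> bool" where
  "F_pure p _ \<longleftrightarrow> root_splits p 1 (1::'a)"

definition nonterm_expansion :: "nat \<Rightarrow> real \<Rightarrow> (nat \<Rightarrow> nat) \<Rightarrow> bool" where
  "nonterm_expansion p \<alpha> a \<longleftrightarrow>
     (\<forall>e\<ge>1. a e < p) \<and> (\<forall>N. \<exists>e>N. a e \<noteq> 0) \<and>
     (\<lambda>i. real (a (Suc i)) / real p ^ Suc i) sums \<alpha>"

text \<open>Numerator of the truncation: <alpha>_e = trunc_num p alpha e / p^e,
 with <0>_e = 0.\<close>
definition trunc_num :: "nat \<Rightarrow> real \<Rightarrow> nat \<Rightarrow> nat" where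
  "trunc_num p \<alpha> e =
     (if \<alpha> = 0 then 0
      else (let a = (SOME a. nonterm_expansion p \<alpha> a)
            in \<Sum>i\<in>{1..e}. a i * p ^ (e - i)))"

definition trunc :: "nat \<Rightarrow> real \<Rightarrow> nat \<Rightarrow> real" where
  "trunc p \<alpha> e = real (trunc_num p \<alpha> e) / real p ^ e"

end

theory Submission
  imports Defs
begin

text \<open>Splittings compose: if \<open>\<theta>\<close> sends \<open>s\<close> to 1 and \<open>\<psi>\<close> sends \<open>t\<close> to 1, then
  \<open>\<psi> \<circ> \<theta>\<close> sends \<open>s \<cdot> t^(p^a)\<close> to 1; iterating, a splitting of \<open>t^(1/p^d)\<close> yields one of
  \<open>(t^(1 + p^d + \<dots> + p^((e-1)d)))^(1/p^(ed))\<close>. On the other side, the truncation numerator of the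
  non-terminating expansion is \<open>\<lceil>p^k \<alpha>\<rceil> - 1\<close>. If \<open>(p^d - 1)\<alpha> = n\<close>, then
  \<open>p^(ed)\<alpha> = n(1 + p^d + \<dots> + p^((e-1)d)) + \<alpha>\<close> with \<open>0 < \<alpha> \<le> 1\<close>, so
  \<open>f^\<langle>\<alpha>\<rangle>_(ed)\<close> is exactly \<open>(f^n)^(1 + p^d + \<dots> + p^((e-1)d))\<close> taken to the \<open>p^(ed)\<close>-th root.\<close>

lemma root_splits_compose:
  fixes s t :: "'a::comm_ring_1"
  assumes "root_splits p a s" and "root_splits p b t"
  shows "root_splits p (a + b) (s * t ^ p ^ a)"
proof -
  obtain \<theta> where \<theta>: "\<forall>x y. \<theta> (x + y) = \<theta> x + \<theta> y" "\<forall>r x. \<theta> (r ^ p ^ a * x) = r * \<theta> x" "\<theta> s = 1"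
    using assms(1) unfolding root_splits_def by blast
  obtain \<psi> where \<psi>: "\<forall>x y. \<psi> (x + y) = \<psi> x + \<psi> y" "\<forall>r x. \<psi> (r ^ p ^ b * x) = r * \<psi> x" "\<psi> t = 1"
    using assms(2) unfolding root_splits_def by blast
  have "r ^ p ^ (a + b) = (r ^ p ^ b) ^ p ^ a" for r :: 'a
    by (simp add: power_add power_mult[symmetric] mult.commute)
  moreover have "\<theta> (s * t ^ p ^ a) = t"
    using \<theta>(2,3) by (metis mult.commute mult.right_neutral)
  ultimately show ?thesis
    unfolding root_splits_def using \<theta> \<psi> by (intro exI[of _ "\<psi> \<circ> \<theta>"]) simp
qed

lemma root_splits_power_geometric_sum:
  fixes t :: "'a::comm_ring_1"
  assumes "root_splits p d t" and "e \<ge> 1"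
  shows "root_splits p (e * d) (t ^ (\<Sum>j<e. (p ^ d) ^ j))"
  using assms(2)
proof (induction e rule: dec_induct)
  case base
  then show ?case using assms(1) by simp
next
  case (step e)
  have "t ^ (\<Sum>j<Suc e. (p ^ d) ^ j) = t * (t ^ (\<Sum>j<e. (p ^ d) ^ j)) ^ p ^ d"
    by (simp add: sum.lessThan_Suc_shift sum_distrib_left[symmetric] power_add
        power_mult[symmetric] mult.commute del: sum.lessThan_Suc)
  then show ?case
    using root_splits_compose[OF assms(1) step.IH] by (simp add: add.commute)
qed

lemma real_digit_sum_eq:
  assumes "p > 0"
  shows "real (\<Sum>i\<in>{1..k}. a i * p ^ (k - i))
           = real p ^ k * (\<Sum>i<k. real (a (Suc i)) / real p ^ Suc i)"
proof (induction k)
  case 0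
  then show ?case by simp
next
  case (Suc k)
  have "(\<Sum>i\<in>{1..k}. a i * p ^ (Suc k - i)) = (\<Sum>i\<in>{1..k}. p * (a i * p ^ (k - i)))"
    by (rule sum.cong) (auto simp: Suc_diff_le)
  then have "(\<Sum>i\<in>{1..Suc k}. a i * p ^ (Suc k - i)) = p * (\<Sum>i\<in>{1..k}. a i * p ^ (k - i)) + a (Suc k)"
    by (simp add: sum_distrib_left)
  then show ?case
    using Suc assms by (simp add: field_simps)
qed

lemma nonterm_expansion_remainder_bounds:
  assumes E: "nonterm_expansion p \<alpha> a" and p: "p \<ge> 2"
  defines "g \<equiv> \<lambda>i. real (a (Suc i)) / real p ^ Suc i"
  shows "0 < \<alpha> - (\<Sum>i<k. g i)" and "\<alpha> - (\<Sum>i<k. g i) \<le> 1 / real p ^ k"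
proof -
  have digit: "\<And>e. e \<ge> 1 \<Longrightarrow> a e < p" and nonterm: "\<And>N. \<exists>e>N. a e \<noteq> 0"
    and "g sums \<alpha>"
    using E unfolding nonterm_expansion_def g_def by auto
  from \<open>g sums \<alpha>\<close> have tail: "(\<lambda>i. g (i + k)) sums (\<alpha> - (\<Sum>i<k. g i))"
    by (rule sums_split_initial_segment)
  obtain e where "e > k" "a e \<noteq> 0"
    using nonterm by blast
  then have "a (Suc (e - Suc k + k)) \<noteq> 0"
    by simp
  then have "0 < g (e - Suc k + k)"
    using p unfolding g_def by simp
  moreover have "0 \<le> g i" for i
    unfolding g_def by simp
  ultimately have "0 < suminf (\<lambda>i. g (i + k))"
    using tail by (intro suminf_pos2[of _ "e - Suc k"]) (simp_all add: sums_iff)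
  then show "0 < \<alpha> - (\<Sum>i<k. g i)"
    using tail by (simp add: sums_iff)
  define c where "c = (real p - 1) / real p ^ Suc k"
  have bound: "g (i + k) \<le> c * (1 / real p) ^ i" for i
  proof -
    have "real (a (Suc (i + k))) \<le> real p - 1"
      using digit[of "Suc (i + k)"] by linarith
    moreover have "real p ^ Suc (i + k) = real p ^ Suc k * real p ^ i"
      by (simp add: power_add)
    ultimately show ?thesis
      unfolding g_def c_def using p
      by (auto simp: mult.assoc power_one_over intro!: divide_right_mono)
  qed
  have geometric: "(\<lambda>i. c * (1 / real p) ^ i) sums (c * (1 / (1 - 1 / real p)))"
    using p by (intro sums_mult geometric_sums) auto
  have "\<alpha> - (\<Sum>i<k. g i) \<le> c * (1 / (1 - 1 / real p))"
    using bound by (rule sums_le[OF _ tail geometric])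
  also have "\<dots> = 1 / real p ^ k"
    unfolding c_def using p by (simp add: field_simps)
  finally show "\<alpha> - (\<Sum>i<k. g i) \<le> 1 / real p ^ k" .
qed

lemma ceiling_mult_bounds:
  fixes x :: real
  assumes "p > 0"
  shows "int p * \<lceil>x\<rceil> - int p < \<lceil>real p * x\<rceil>" and "\<lceil>real p * x\<rceil> \<le> int p * \<lceil>x\<rceil>"
proof -
  have "real p * (of_int \<lceil>x\<rceil> - 1) < real p * x"
    using assms by (intro mult_strict_left_mono) linarith+
  also have "\<dots> \<le> of_int \<lceil>real p * x\<rceil>"
    by (rule le_of_int_ceiling)
  finally have "real_of_int (int p * \<lceil>x\<rceil> - int p) < of_int \<lceil>real p * x\<rceil>"
    by (simp add: algebra_simps)
  then show "int p * \<lceil>x\<rceil> - int p < \<lceil>real p * x\<rceil>"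
    by (simp only: of_int_less_iff)
  have "real p * x \<le> real p * of_int \<lceil>x\<rceil>"
    by (simp add: mult_left_mono)
  then show "\<lceil>real p * x\<rceil> \<le> int p * \<lceil>x\<rceil>"
    by (simp add: ceiling_le_iff)
qed

lemma sums_not_eventually_zero:
  fixes g :: "nat \<Rightarrow> real"
  assumes "g sums s" and "\<And>k. (\<Sum>i<k. g i) < s"
  shows "\<exists>i>N. g i \<noteq> 0"
proof (rule ccontr)
  assume "\<not> (\<exists>i>N. g i \<noteq> 0)"
  then have "(\<lambda>i. g (i + Suc N)) = (\<lambda>i. 0)"
    by auto
  moreover have "(\<lambda>i. g (i + Suc N)) sums (s - (\<Sum>i<Suc N. g i))"
    using assms(1) by (rule sums_split_initial_segment)
  ultimately have "s - (\<Sum>i<Suc N. g i) = 0"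
    using sums_zero sums_unique2 by metis
  then show False
    using assms(2)[of "Suc N"] by simp
qed

lemma nonterm_expansion_exists:
  assumes "0 < \<alpha>" and "\<alpha> \<le> 1" and p: "p \<ge> 2"
  shows "\<exists>a. nonterm_expansion p \<alpha> a"
proof -
  define c :: "nat \<Rightarrow> int" where "c i = \<lceil>real p ^ i * \<alpha>\<rceil> - 1" for i
  define a where "a i = (if i = 0 then 0 else nat (c i - int p * c (i - 1)))" for i
  define g where "g i = real (a (Suc i)) / real p ^ Suc i" for i
  have c_bounds: "of_int (c i) < real p ^ i * \<alpha>" "real p ^ i * \<alpha> \<le> of_int (c i) + 1" for i
    unfolding c_def by linarith+
  have "c 0 = 0"
    unfolding c_def using assms by (simp add: ceiling_eq_iff)
  have digit: "0 \<le> c (Suc i) - int p * c i \<and> c (Suc i) - int p * c i < int p" for i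
    using ceiling_mult_bounds[of p "real p ^ i * \<alpha>"] p
    unfolding c_def by (simp add: mult.assoc algebra_simps)
  have partial: "(\<Sum>i<k. g i) = of_int (c k) / real p ^ k" for k
  proof (induction k)
    case 0
    then show ?case using \<open>c 0 = 0\<close> by simp
  next
    case (Suc k)
    have "real (a (Suc k)) = of_int (c (Suc k) - int p * c k)"
      unfolding a_def using digit[of k] by simp
    then show ?case
      using Suc p by (simp add: g_def field_simps)
  qed
  have p_pow: "real p ^ k > 0" for k
    using p by simp
  have below: "(\<Sum>i<k. g i) < \<alpha>" for k
    using c_bounds(1)[of k] p_pow[of k] by (simp add: partial pos_divide_less_eq mult.commute)
  have above: "\<alpha> - (1 / real p) ^ k \<le> (\<Sum>i<k. g i)" for k
  proof -
    have "(real p ^ k * \<alpha> - 1) / real p ^ k \<le> of_int (c k) / real p ^ k"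
      using c_bounds(2)[of k] p_pow[of k] by (intro divide_right_mono) auto
    then show ?thesis
      using p_pow[of k] p by (simp add: partial power_one_over diff_divide_distrib)
  qed
  have "(\<lambda>k. (1 / real p) ^ k) \<longlonglongrightarrow> 0"
    using p by (intro LIMSEQ_power_zero) auto
  then have "(\<lambda>k. \<alpha> - (1 / real p) ^ k) \<longlonglongrightarrow> \<alpha> - 0"
    by (intro tendsto_diff tendsto_const)
  moreover have "\<forall>\<^sub>F k in sequentially. \<alpha> - (1 / real p) ^ k \<le> (\<Sum>i<k. g i)"
    using above by (intro always_eventually allI)
  moreover have "\<forall>\<^sub>F k in sequentially. (\<Sum>i<k. g i) \<le> \<alpha>"
    using below by (intro always_eventually allI less_imp_le)
  ultimately have "(\<lambda>k. \<Sum>i<k. g i) \<longlonglongrightarrow> \<alpha>"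
    using real_tendsto_sandwich[OF _ _ _ tendsto_const] by simp
  then have "g sums \<alpha>"
    unfolding sums_def .
  moreover have "\<exists>e>N. a e \<noteq> 0" for N
  proof -
    obtain i where "i > N" "g i \<noteq> 0"
      using sums_not_eventually_zero[OF \<open>g sums \<alpha>\<close> below] by blast
    then show ?thesis
      unfolding g_def by (intro exI[of _ "Suc i"]) auto
  qed
  moreover have "a e < p" if "e \<ge> 1" for e
    using that digit[of "e - 1"] unfolding a_def by (simp add: nat_less_iff)
  ultimately show ?thesis
    unfolding nonterm_expansion_def g_def by blast
qed

lemma trunc_num_bounds:
  assumes "0 < \<alpha>" and "\<alpha> \<le> 1" and p: "p \<ge> 2"
  shows "real (trunc_num p \<alpha> k) < real p ^ k * \<alpha>"
    and "real p ^ k * \<alpha> \<le> real (trunc_num p \<alpha> k) + 1"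
proof -
  define a where "a = (SOME a. nonterm_expansion p \<alpha> a)"
  have E: "nonterm_expansion p \<alpha> a"
    unfolding a_def using nonterm_expansion_exists[OF assms] by (rule someI_ex)
  have "trunc_num p \<alpha> k = (\<Sum>i\<in>{1..k}. a i * p ^ (k - i))"
    unfolding trunc_num_def a_def using assms by (simp add: Let_def)
  then have "real (trunc_num p \<alpha> k) = real p ^ k * (\<Sum>i<k. real (a (Suc i)) / real p ^ Suc i)"
    using p by (simp only: real_digit_sum_eq)
  moreover have "real p ^ k > 0"
    using p by simp
  ultimately show "real (trunc_num p \<alpha> k) < real p ^ k * \<alpha>"
    and "real p ^ k * \<alpha> \<le> real (trunc_num p \<alpha> k) + 1"
    using nonterm_expansion_remainder_bounds[OF E p, of k]
    by (simp_all add: right_diff_distrib pos_le_divide_eq mult.commute)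
qed

lemma trunc_num_eq_of_fixed_point:
  assumes "0 \<le> \<alpha>" and "\<alpha> \<le> 1" and "p \<ge> 2"
    and K: "(real p ^ k - 1) * \<alpha> = real K"
  shows "trunc_num p \<alpha> k = K"
proof (cases "\<alpha> = 0")
  case True
  then show ?thesis
    using K by (simp add: trunc_num_def)
next
  case False
  then have "0 < \<alpha>"
    using assms(1) by simp
  moreover have "real p ^ k * \<alpha> = real K + \<alpha>"
    using K by (simp add: algebra_simps)
  ultimately show ?thesis
    using trunc_num_bounds[of \<alpha> p k] assms(2,3) by simp
qed

lemma trunc_num_mult_eq:
  assumes "0 \<le> \<alpha>" and "\<alpha> \<le> 1" and "p \<ge> 2"
    and n: "(real p ^ d - 1) * \<alpha> = real n"
  shows "trunc_num p \<alpha> (e * d) = n * (\<Sum>j<e. (p ^ d) ^ j)"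
proof (rule trunc_num_eq_of_fixed_point[OF assms(1-3)])
  have "(real p ^ (e * d) - 1) * \<alpha> = (real p ^ d - 1) * \<alpha> * (\<Sum>j<e. (real p ^ d) ^ j)"
    by (simp add: power_mult mult.commute power_diff_1_eq)
  then show "(real p ^ (e * d) - 1) * \<alpha> = real (n * (\<Sum>j<e. (p ^ d) ^ j))"
    using n by simp
qed

theorem mainTheorem8:
  fixes f :: "'a::comm_ring_1" and p d :: nat and \<alpha> :: real
  assumes "prime p"
    and "CHAR('a) = p"
    and "F_pure p TYPE('a)"
    and "f \<noteq> 0" and "\<not> f dvd 1"
    and "d \<ge> 1"
    and "0 \<le> \<alpha>" and "\<alpha> \<le> 1"
    and "\<exists>n::nat. (real p ^ d - 1) * \<alpha> = real n"
    and "root_splits p d (f ^ trunc_num p \<alpha> d)"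
  shows "\<forall>e::nat. e \<ge> 1 \<longrightarrow> root_splits p (e * d) (f ^ trunc_num p \<alpha> (e * d))"
proof (intro allI impI)
  fix e :: nat
  assume "e \<ge> 1"
  have p: "p \<ge> 2"
    using \<open>prime p\<close> by (simp add: prime_ge_2_nat)
  obtain n :: nat where n: "(real p ^ d - 1) * \<alpha> = real n"
    using assms(9) by blast
  have trunc: "trunc_num p \<alpha> (k * d) = n * (\<Sum>j<k. (p ^ d) ^ j)" for k
    using trunc_num_mult_eq[OF assms(7,8) p n] .
  have "root_splits p d (f ^ n)"
    using assms(10) trunc[of 1] by simp
  then have "root_splits p (e * d) ((f ^ n) ^ (\<Sum>j<e. (p ^ d) ^ j))"
    using \<open>e \<ge> 1\<close> by (rule root_splits_power_geometric_sum)
  then show "root_splits p (e * d) (f ^ trunc_num p \<alpha> (e * d))"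
    by (simp add: trunc power_mult)
qed

end
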